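(* Fix $\rho\in(0,2]$. For any $N\ge1$, $\kappa\ne0$ and $\omega_1,\dots,\omega_N\in\mathbb{R}$ with \[ N\ge\frac2\rho,\qquad\frac{\max_i|\omega_i|}{|\kappa|}<\frac{\rho^{1.5}}{16}, \] there exists an equilibrium $(\theta_i^0)_{i=1}^N$ of the system $\dot\theta_i=\omega_i-\frac{\kappa}{N}\sum_{j=1}^N(1+\cos\theta_j)\sin\theta_i$ whose order parameter $\frac1N\sum_j(1+\cos\theta_j^0)$ lies in $[\frac14\rho,\frac32\rho]$. Moreover, it can be chosen so that there exists $1\le m\le N$ with $\frac\rho4<\frac mN\le\frac\rho2$ and \[ \frac{2|\omega_i|}{3\rho|\kappa|}\le|\theta_i^0|\le\frac{2\pi|\omega_i|}{\rho|\kappa|}\ (i=1,\dots,m),\qquad\frac{2|\omega_i|}{3\rho|\kappa|}\le|\theta_i^0-\pi|\le\frac{2\pi|\omega_i|}{\rho|\kappa|}\ (i=m+1,\dots,N). \]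
   Context: An equilibrium is an initial datum for which the right-hand side vanishes for every $i$ (so the solution is constant). *)

theory Defs
  imports Complex_Main
begin

text \<open>Oscillators are indexed by i = 1..N; phases and frequencies are functions nat => real.\<close>

definition rhs :: "nat \<Rightarrow> real \<Rightarrow> (nat \<Rightarrow> real) \<Rightarrow> (nat \<Rightarrow> real) \<Rightarrow> nat \<Rightarrow> real" where
  "rhs N \<kappa> \<omega> \<theta> i =
     \<omega> i - (\<kappa> / real N) * (\<Sum>j=1..N. (1 + cos (\<theta> j))) * sin (\<theta> i)"

definition is_equilibrium :: "nat \<Rightarrow> real \<Rightarrow> (nat \<Rightarrow> real) \<Rightarrow> (nat \<Rightarrow> real) \<Rightarrow> bool" where
  "is_equilibrium N \<kappa> \<omega> \<theta> \<longleftrightarrow> (\<forall>i\<in>{1..N}. rhs N \<kappa> \<omega> \<theta> i = 0)"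

definition order_param :: "nat \<Rightarrow> (nat \<Rightarrow> real) \<Rightarrow> real" where
  "order_param N \<theta> = (1 / real N) * (\<Sum>j=1..N. (1 + cos (\<theta> j)))"

end

theory Submission
  imports Defs "HOL-Analysis.Convex"
begin

text \<open>Write \<open>w\<^sub>i = \<omega>\<^sub>i / \<kappa>\<close>. A configuration with order parameter \<open>R > 0\<close> is an equilibrium
  iff \<open>R sin \<theta>\<^sub>i = w\<^sub>i\<close> for all \<open>i\<close>. Put the first \<open>m \<approx> \<rho>N/2\<close> phases at \<open>arcsin (w\<^sub>i / R)\<close>, near 0,
  and the others at \<open>\<pi> - arcsin (w\<^sub>i / R)\<close>, near \<open>\<pi>\<close>. Since the frequencies are small, the
  order parameter \<open>F R\<close> of this configuration is close to \<open>2m/N \<in> (\<rho>/2, \<rho>]\<close>, so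
  \<open>F (\<rho>/4) \<ge> \<rho>/4\<close> and \<open>F (3\<rho>/2) \<le> 3\<rho>/2\<close>, and the intermediate value theorem yields a
  self-consistent \<open>R = F R\<close>. The phase bounds follow from \<open>|s| \<le> |arcsin s| \<le> \<pi>/2 |s|\<close>,
  the upper one being Jordan's inequality.\<close>

lemma Jordan_inequality:
  fixes x :: real
  assumes "0 \<le> x" "x \<le> pi / 2"
  shows "2 / pi * x \<le> sin x"
proof -
  have "concave_on {0..pi/2} sin"
    by (rule f''_le0_imp_concave[where f' = cos and f'' = "\<lambda>x. - sin x"])
      (auto intro!: derivative_eq_intros sin_ge_zero)
  from concave_onD_Icc'[OF this] assms show ?thesis
    by simp
qed

lemma abs_arcsin_bounds:
  fixes s :: real
  assumes "\<bar>s\<bar> \<le> 1"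
  shows "\<bar>s\<bar> \<le> \<bar>arcsin s\<bar>" and "\<bar>arcsin s\<bar> \<le> pi / 2 * \<bar>s\<bar>"
proof -
  have "\<bar>arcsin s\<bar> = arcsin \<bar>s\<bar>"
    using assms arcsin_minus[of s] arcsin_nonneg[of "\<bar>s\<bar>"] by (cases "s \<ge> 0") auto
  moreover have "sin (arcsin \<bar>s\<bar>) = \<bar>s\<bar>"
    using assms by simp
  moreover have "0 \<le> arcsin \<bar>s\<bar>" "arcsin \<bar>s\<bar> \<le> pi / 2"
    using assms arcsin_nonneg[of "\<bar>s\<bar>"] arcsin_bounded[of "\<bar>s\<bar>"] by auto
  ultimately show "\<bar>s\<bar> \<le> \<bar>arcsin s\<bar>" "\<bar>arcsin s\<bar> \<le> pi / 2 * \<bar>s\<bar>"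
    using abs_sin_x_le_abs_x[of "arcsin \<bar>s\<bar>"] Jordan_inequality[of "arcsin \<bar>s\<bar>"]
    by (auto simp: field_simps)
qed

lemma abs_arcsin_div_bounds:
  fixes x R a b :: real
  assumes "0 < a" "a \<le> R" "R \<le> b" "\<bar>x\<bar> \<le> R"
  shows "\<bar>x\<bar> / b \<le> \<bar>arcsin (x / R)\<bar>" and "\<bar>arcsin (x / R)\<bar> \<le> pi / 2 * \<bar>x\<bar> / a"
proof -
  have "\<bar>x / R\<bar> \<le> 1"
    using assms by simp
  note bounds = abs_arcsin_bounds[OF this]
  have "\<bar>x\<bar> / b \<le> \<bar>x\<bar> / R"
    using assms by (intro divide_left_mono) auto
  with bounds(1) show "\<bar>x\<bar> / b \<le> \<bar>arcsin (x / R)\<bar>"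
    using assms by simp
  have "\<bar>arcsin (x / R)\<bar> \<le> pi / 2 * (\<bar>x\<bar> / R)"
    using bounds(2) assms by simp
  also have "\<dots> \<le> pi / 2 * (\<bar>x\<bar> / a)"
    using assms by (intro mult_left_mono divide_left_mono) auto
  finally show "\<bar>arcsin (x / R)\<bar> \<le> pi / 2 * \<bar>x\<bar> / a"
    by simp
qed

lemma is_equilibrium_iff_order_param:
  "is_equilibrium N \<kappa> \<omega> \<theta> \<longleftrightarrow> (\<forall>i\<in>{1..N}. \<omega> i = \<kappa> * order_param N \<theta> * sin (\<theta> i))"
  unfolding is_equilibrium_def rhs_def order_param_def by auto

lemma of_nat_mult_order_param:
  "real N * order_param N \<theta> = (\<Sum>j=1..N. 1 + cos (\<theta> j))"
  unfolding order_param_def by (cases "N = 0") auto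

lemma abs_le_imp_divide_bounds:
  fixes x R :: real
  assumes "\<bar>x\<bar> \<le> R"
  shows "- 1 \<le> x / R" and "x / R \<le> 1"
  using assms by (cases "R = 0"; simp add: field_simps abs_le_iff)+

definition split_phases :: "nat \<Rightarrow> (nat \<Rightarrow> real) \<Rightarrow> real \<Rightarrow> nat \<Rightarrow> real" where
  "split_phases m w R j = (if j \<le> m then arcsin (w j / R) else pi - arcsin (w j / R))"

lemma sin_split_phases:
  assumes "\<bar>w j\<bar> \<le> R"
  shows "sin (split_phases m w R j) = w j / R"
  using abs_le_imp_divide_bounds[OF assms] unfolding split_phases_def by simp

lemma cos_split_phases_bounds:
  assumes "(w j / R)\<^sup>2 \<le> \<delta>" "\<delta> \<le> 1"
  shows "j \<le> m \<Longrightarrow> 2 - \<delta> \<le> 1 + cos (split_phases m w R j) \<and> 1 + cos (split_phases m w R j) \<le> 2"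
    and "m < j \<Longrightarrow> 0 \<le> 1 + cos (split_phases m w R j) \<and> 1 + cos (split_phases m w R j) \<le> \<delta>"
proof -
  define y where "y = 1 - (w j / R)\<^sup>2"
  have "0 \<le> y" "y \<le> 1"
    using assms unfolding y_def by auto
  then have "y \<le> sqrt y"
    by (intro real_le_rsqrt) (simp add: power2_eq_square mult_left_le_one_le)
  moreover have "cos (arcsin (w j / R)) = sqrt y"
    using \<open>0 \<le> y\<close> abs_square_le_1[of "w j / R"] abs_le_iff[of "w j / R" 1]
    unfolding y_def by (intro cos_arcsin) auto
  moreover have "sqrt y \<le> 1"
    using \<open>y \<le> 1\<close> by simp
  ultimately show "j \<le> m \<Longrightarrow> 2 - \<delta> \<le> 1 + cos (split_phases m w R j) \<and> 1 + cos (split_phases m w R j) \<le> 2"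
    and "m < j \<Longrightarrow> 0 \<le> 1 + cos (split_phases m w R j) \<and> 1 + cos (split_phases m w R j) \<le> \<delta>"
    using assms(1) unfolding split_phases_def y_def by auto
qed

lemma order_param_split_phases_bounds:
  assumes "m \<le> N" "\<delta> \<le> 1" "\<And>j. j \<in> {1..N} \<Longrightarrow> (w j / R)\<^sup>2 \<le> \<delta>"
  shows "real m * (2 - \<delta>) \<le> real N * order_param N (split_phases m w R)"
    and "real N * order_param N (split_phases m w R) \<le> 2 * real m + real (N - m) * \<delta>"
proof -
  let ?t = "\<lambda>j. 1 + cos (split_phases m w R j)"
  have "{1..N} = {1..m} \<union> {m+1..N}"
    using assms(1) by auto
  then have split: "real N * order_param N (split_phases m w R) = (\<Sum>j=1..m. ?t j) + (\<Sum>j=m+1..N. ?t j)"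
    by (simp add: of_nat_mult_order_param sum.union_disjoint)
  have lower: "2 - \<delta> \<le> ?t j" and upper: "?t j \<le> 2" if "j \<in> {1..m}" for j
    using cos_split_phases_bounds(1)[OF assms(3) assms(2)] that assms(1) by auto
  have "real m * (2 - \<delta>) \<le> (\<Sum>j=1..m. ?t j)"
    using sum_mono[of "{1..m}" "\<lambda>_. 2 - \<delta>" ?t] lower by simp
  moreover have "0 \<le> (\<Sum>j=m+1..N. ?t j)"
    by (intro sum_nonneg) (simp add: cos_split_phases_bounds(2)[OF assms(3) assms(2)])
  ultimately show "real m * (2 - \<delta>) \<le> real N * order_param N (split_phases m w R)"
    unfolding split by linarith
  have "(\<Sum>j=1..m. ?t j) \<le> 2 * real m"
    using sum_mono[of "{1..m}" ?t "\<lambda>_. 2"] upper by simp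
  moreover have "(\<Sum>j=m+1..N. ?t j) \<le> real (N - m) * \<delta>"
    using sum_mono[of "{m+1..N}" ?t "\<lambda>_. \<delta>"] cos_split_phases_bounds(2)[OF assms(3) assms(2)]
    by simp
  ultimately show "real N * order_param N (split_phases m w R) \<le> 2 * real m + real (N - m) * \<delta>"
    unfolding split by linarith
qed

lemma continuous_on_order_param_split_phases:
  assumes "\<And>R j. R \<in> S \<Longrightarrow> j \<in> {1..N} \<Longrightarrow> \<bar>w j\<bar> \<le> R" "0 \<notin> S"
  shows "continuous_on S (\<lambda>R. order_param N (split_phases m w R))"
  unfolding order_param_def
proof (intro continuous_intros)
  fix j assume j: "j \<in> {1..N}"
  have "- 1 \<le> w j / R \<and> w j / R \<le> 1" if "R \<in> S" for R
    using abs_le_imp_divide_bounds[OF assms(1)[OF that j]] by simp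
  then have "continuous_on S (\<lambda>R. arcsin (w j / R))"
    using assms(2) by (intro continuous_intros) auto
  then show "continuous_on S (\<lambda>R. split_phases m w R j)"
    unfolding split_phases_def by (cases "j \<le> m") (simp_all add: continuous_on_diff)
qed

lemma small_frequency_ratio:
  fixes \<rho> R w :: real
  assumes "0 < \<rho>" "\<rho> \<le> 16" "\<rho> / 4 \<le> R" "w\<^sup>2 \<le> \<rho> ^ 3 / 256"
  shows "(w / R)\<^sup>2 \<le> \<rho> / 16" and "\<bar>w\<bar> \<le> R"
proof -
  have "w\<^sup>2 \<le> \<rho> / 16 * (\<rho> / 4)\<^sup>2"
    using assms(4) by (simp add: power2_eq_square power3_eq_cube)
  also have "\<dots> \<le> \<rho> / 16 * R\<^sup>2"
    using assms(1,3) by (intro mult_left_mono power_mono) auto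
  finally show ratio: "(w / R)\<^sup>2 \<le> \<rho> / 16"
    using assms(1,3) by (simp add: power_divide divide_le_eq)
  then have "\<bar>w / R\<bar> \<le> 1"
    using assms(2) abs_square_le_1[of "w / R"] by linarith
  then show "\<bar>w\<bar> \<le> R"
    using assms(1,3) by (simp add: field_simps)
qed

lemma exists_cluster_size:
  fixes \<rho> :: real
  assumes "0 < \<rho>" "\<rho> \<le> 2" "2 / \<rho> \<le> real N"
  shows "\<exists>m. 1 \<le> m \<and> m \<le> N \<and> \<rho> / 4 < real m / real N \<and> real m / real N \<le> \<rho> / 2"
proof -
  define x where "x = \<rho> * real N / 2"
  define m where "m = nat \<lfloor>x\<rfloor>"
  have "1 \<le> x"
    using assms unfolding x_def by (simp add: field_simps)
  then have "real m = of_int \<lfloor>x\<rfloor>" and "1 \<le> \<lfloor>x\<rfloor>"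
    unfolding m_def by auto
  then have "1 \<le> m" "x / 2 < real m" "real m \<le> x"
    unfolding m_def by linarith+
  moreover have "x \<le> real N"
    using mult_right_mono[OF assms(2), of "real N"] unfolding x_def by simp
  ultimately have "m \<le> N"
    by linarith
  moreover have "0 < real N"
    using \<open>1 \<le> x\<close> \<open>x \<le> real N\<close> by linarith
  ultimately show ?thesis
    using \<open>1 \<le> m\<close> \<open>x / 2 < real m\<close> \<open>real m \<le> x\<close>
    unfolding x_def by (intro exI[of _ m]) (auto simp: field_simps)
qed

lemma split_phases_self_consistent:
  fixes \<rho> :: real
  assumes "0 < \<rho>" "\<rho> \<le> 2" "m \<le> N" "\<rho> / 4 < real m / real N" "real m / real N \<le> \<rho> / 2"
    and w_small: "\<And>j. j \<in> {1..N} \<Longrightarrow> (w j)\<^sup>2 \<le> \<rho> ^ 3 / 256"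
  shows "\<exists>R. \<rho> / 4 \<le> R \<and> R \<le> 3 / 2 * \<rho> \<and> order_param N (split_phases m w R) = R"
proof -
  define F where "F R = order_param N (split_phases m w R)" for R
  have N_pos: "0 < real N"
    using assms(1,4) by (cases "N = 0") auto
  have m_bounds: "\<rho> * real N / 4 < real m" "real m \<le> \<rho> * real N / 2"
    using assms(4,5) N_pos by (simp_all add: field_simps)
  have ratio_small: "(w j / R)\<^sup>2 \<le> \<rho> / 16" if "\<rho> / 4 \<le> R" "j \<in> {1..N}" for R j
    using small_frequency_ratio(1)[OF assms(1) _ that(1) w_small[OF that(2)]] assms(2) by simp
  have "\<bar>w j\<bar> \<le> R" if "R \<in> {\<rho>/4..3/2*\<rho>}" "j \<in> {1..N}" for R j
    using small_frequency_ratio(2)[OF assms(1) _ _ w_small[OF that(2)]] that(1) assms(2) by simp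
  then have "continuous_on {\<rho>/4..3/2*\<rho>} (\<lambda>R. F R - R)"
    unfolding F_def using assms(1)
    by (intro continuous_intros continuous_on_order_param_split_phases) auto
  moreover have "\<rho> / 4 \<le> F (\<rho> / 4)"
  proof -
    have "real N * (\<rho> / 4) < real m * 1"
      using m_bounds(1) by (simp add: mult.commute)
    also have "\<dots> \<le> real m * (2 - \<rho> / 16)"
      using assms(2) by (intro mult_left_mono) auto
    also have "\<dots> \<le> real N * F (\<rho> / 4)"
      unfolding F_def by (rule order_param_split_phases_bounds(1)) (use ratio_small[of "\<rho> / 4"] assms in auto)
    finally show ?thesis
      using N_pos by simp
  qed
  moreover have "F (3 / 2 * \<rho>) \<le> 3 / 2 * \<rho>"
  proof -
    have "real N * F (3 / 2 * \<rho>) \<le> 2 * real m + real (N - m) * (\<rho> / 16)"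
      unfolding F_def
      by (rule order_param_split_phases_bounds(2)) (use ratio_small[of "3 / 2 * \<rho>"] assms in auto)
    also have "\<dots> \<le> \<rho> * real N + real N * (\<rho> / 16)"
      using m_bounds(2) mult_right_mono[of "real (N - m)" "real N" "\<rho> / 16"] assms(1) by linarith
    also have "\<dots> \<le> real N * (3 / 2 * \<rho>)"
      using N_pos assms(1) by (simp add: field_simps)
    finally show ?thesis
      using N_pos by simp
  qed
  ultimately obtain R where "\<rho> / 4 \<le> R" "R \<le> 3 / 2 * \<rho>" "F R - R = 0"
    using IVT2'[of "\<lambda>R. F R - R" "3 / 2 * \<rho>" 0 "\<rho> / 4"] assms(1) by auto
  then show ?thesis
    unfolding F_def by auto
qed

lemma frequency_ratio_sq_le:
  fixes \<omega> :: "nat \<Rightarrow> real" and \<rho> \<kappa> :: real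
  assumes "0 < \<rho>" "finite A" "j \<in> A"
    and "Max ((\<lambda>i. \<bar>\<omega> i\<bar>) ` A) / \<bar>\<kappa>\<bar> < \<rho> powr (3/2) / 16"
  shows "(\<omega> j / \<kappa>)\<^sup>2 \<le> \<rho> ^ 3 / 256"
proof -
  have "\<bar>\<omega> j / \<kappa>\<bar> \<le> Max ((\<lambda>i. \<bar>\<omega> i\<bar>) ` A) / \<bar>\<kappa>\<bar>"
    using assms(2,3) by (simp add: divide_right_mono)
  also have "\<dots> < \<rho> powr (3/2) / 16"
    by (rule assms(4))
  finally have "\<bar>\<omega> j / \<kappa>\<bar>\<^sup>2 \<le> (\<rho> powr (3/2) / 16)\<^sup>2"
    by (intro power_mono) auto
  also have "\<dots> = \<rho> ^ 3 / 256"
    using assms(1) by (simp add: power_divide powr_power)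
  finally show ?thesis
    by (simp only: power2_abs)
qed

theorem theorem2p20:
  fixes \<rho> \<kappa> :: real and N :: nat and \<omega> :: "nat \<Rightarrow> real"
  assumes "0 < \<rho>" and "\<rho> \<le> 2"
    and "N \<ge> 1" and "\<kappa> \<noteq> 0"
    and "real N \<ge> 2 / \<rho>"
    and "Max ((\<lambda>i. \<bar>\<omega> i\<bar>) ` {1..N}) / \<bar>\<kappa>\<bar> < \<rho> powr (3/2) / 16"
  shows "\<exists>\<theta> :: nat \<Rightarrow> real.
           is_equilibrium N \<kappa> \<omega> \<theta>
         \<and> \<rho> / 4 \<le> order_param N \<theta> \<and> order_param N \<theta> \<le> 3 / 2 * \<rho>
         \<and> (\<exists>m::nat. 1 \<le> m \<and> m \<le> N
              \<and> \<rho> / 4 < real m / real N \<and> real m / real N \<le> \<rho> / 2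
              \<and> (\<forall>i\<in>{1..m}.
                   2 * \<bar>\<omega> i\<bar> / (3 * \<rho> * \<bar>\<kappa>\<bar>) \<le> \<bar>\<theta> i\<bar>
                 \<and> \<bar>\<theta> i\<bar> \<le> 2 * pi * \<bar>\<omega> i\<bar> / (\<rho> * \<bar>\<kappa>\<bar>))
              \<and> (\<forall>i\<in>{m+1..N}.
                   2 * \<bar>\<omega> i\<bar> / (3 * \<rho> * \<bar>\<kappa>\<bar>) \<le> \<bar>\<theta> i - pi\<bar>
                 \<and> \<bar>\<theta> i - pi\<bar> \<le> 2 * pi * \<bar>\<omega> i\<bar> / (\<rho> * \<bar>\<kappa>\<bar>)))"
proof -
  define w where "w j = \<omega> j / \<kappa>" for j
  have w_small: "(w j)\<^sup>2 \<le> \<rho> ^ 3 / 256" if "j \<in> {1..N}" for j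
    using frequency_ratio_sq_le[OF assms(1) _ that assms(6)] unfolding w_def by simp
  obtain m where m: "1 \<le> m" "m \<le> N" "\<rho> / 4 < real m / real N" "real m / real N \<le> \<rho> / 2"
    using exists_cluster_size assms(1,2,5) by blast
  obtain R where R: "\<rho> / 4 \<le> R" "R \<le> 3 / 2 * \<rho>" "order_param N (split_phases m w R) = R"
    using split_phases_self_consistent[OF assms(1,2) m(2-4)] w_small by blast
  define \<theta> where "\<theta> = split_phases m w R"
  have w_le_R: "\<bar>w i\<bar> \<le> R" if "i \<in> {1..N}" for i
    using small_frequency_ratio(2)[OF assms(1) _ R(1) w_small[OF that]] assms(2) by simp
  have equilibrium: "is_equilibrium N \<kappa> \<omega> \<theta>"
    using w_le_R R(1) assms(1,4)
    by (simp add: is_equilibrium_iff_order_param \<theta>_def R(3) sin_split_phases w_def)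
  have arcsin_bounds: "2 * \<bar>\<omega> i\<bar> / (3 * \<rho> * \<bar>\<kappa>\<bar>) \<le> \<bar>arcsin (w i / R)\<bar>
      \<and> \<bar>arcsin (w i / R)\<bar> \<le> 2 * pi * \<bar>\<omega> i\<bar> / (\<rho> * \<bar>\<kappa>\<bar>)" if "i \<in> {1..N}" for i
    using abs_arcsin_div_bounds[of "\<rho> / 4" R "3 / 2 * \<rho>" "w i"] w_le_R[OF that] R assms(1)
    by (simp add: w_def field_simps)
  have "\<forall>i\<in>{1..m}. 2 * \<bar>\<omega> i\<bar> / (3 * \<rho> * \<bar>\<kappa>\<bar>) \<le> \<bar>\<theta> i\<bar>
      \<and> \<bar>\<theta> i\<bar> \<le> 2 * pi * \<bar>\<omega> i\<bar> / (\<rho> * \<bar>\<kappa>\<bar>)"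
    using arcsin_bounds m(2) by (simp add: \<theta>_def split_phases_def)
  moreover have "\<forall>i\<in>{m+1..N}. 2 * \<bar>\<omega> i\<bar> / (3 * \<rho> * \<bar>\<kappa>\<bar>) \<le> \<bar>\<theta> i - pi\<bar>
      \<and> \<bar>\<theta> i - pi\<bar> \<le> 2 * pi * \<bar>\<omega> i\<bar> / (\<rho> * \<bar>\<kappa>\<bar>)"
    using arcsin_bounds m(1) by (simp add: \<theta>_def split_phases_def)
  ultimately show ?thesis
    using equilibrium R m unfolding \<theta>_def[symmetric] by blast
qed

end
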